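(* Consider the ergodic Markov process described in the context, with equilibrium distribution $p$. If $p_1,\dots,p_{2^cK}:W\to\mathbb C$ are $2^cK$ linearly independent, absolutely convergent solutions of the inner equations, then there are (possibly complex-valued) constants $\alpha_1,\dots,\alpha_{2^cK}$, uniquely determined (by the equilibrium equations for the states in $V$ and the states $\mathbf n\in W$ with $n_0<K$, together with the normalization condition), such that \[ p(\mathbf n)=\sum_{j=1}^{2^cK}\alpha_j p_j(\mathbf n),\qquad \mathbf n\in W. \]
   Context: Fix integers $c\ge 1$ and $K\ge 1$. Consider an irreducible continuous-time Markov process on the state space $V\cup W$, where $V$ is a finite set and $W=\{\mathbf n=(n_0,n_1,\dots,n_c): n_0\in\{0,1,2,\dots\},\ n_i\in\{0,1\},\ i=1,\dots,c\}$. For each $i\in\{1,\dots,c\}$ and each integer $k\le K$ there are nonnegative rates $a_{k,i},b_{k,i},c_{k,i},d_{k,i}$. From a state $\mathbf n\in W$, for each $i$ and each $k\in\{-n_0,\dots,K\}$, the process jumps (changing only coordinates $0$ and $i$) from $(n_0,n_i)=(n_0,0)$ to $(n_0+k,1)$ at rate $a_{k,i}$ and to $(n_0+k,0)$ at rate $b_{k,i}$, and from $(n_0,n_i)=(n_0,1)$ to $(n_0+k,1)$ at rate $c_{k,i}$ and to $(n_0+k,0)$ at rate $d_{k,i}$; moreover from $\mathbf n$ it jumps into $V$ with total rate $\sum_{i=1}^c\sum_{k\le -n_0-1}\bigl((1-n_i)(a_{k,i}+b_{k,i})+n_i(c_{k,i}+d_{k,i})\bigr)$. There are no other transitions out of $W$.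 From states in $V$ no transitions are possible to states $\mathbf n\in W$ with $n_0\ge K$. All total outgoing rates are finite. The process is assumed ergodic and $p(\mathbf n)$ denotes its equilibrium probability of state $\mathbf n$. Let $e_i$ be the vector of length $c+1$ (indexed $0,\dots,c$) with a $1$ in position $i$ and zeros elsewhere. The inner equations are, for a function $q:W\to\mathbb C$ and all $\mathbf n\in W$ with $n_0\ge K$: \[\sum_{i=1}^c\sum_{k=-\infty}^K\bigl((1-n_i)(a_{k,i}+b_{k,i})+n_i(c_{k,i}+d_{k,i})\bigr)q(\mathbf n)=\sum_{i=1}^c\sum_{k=-\infty}^K\Bigl((1-n_i)\bigl(b_{k,i}q(\mathbf n-ke_0)+d_{k,i}q(\mathbf n-ke_0+e_i)\bigr)+n_i\bigl(a_{k,i}q(\mathbf n-ke_0-e_i)+c_{k,i}q(\mathbf n-ke_0)\bigr)\Bigr).\] A solution $q$ is called absolutely convergent if $\sum_{\mathbf n\in W}|q(\mathbf n)|<\infty$. *)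

theory Defs
  imports "HOL-Analysis.Analysis"
begin

text \<open>States of W: a pair (n0, A) where A is the set of indices i in {1..c} with n_i = 1.
  The full state space is V + W, with V a finite type.\<close>

type_synonym wstate = "nat \<times> nat set"

definition Wset :: "nat \<Rightarrow> wstate set" where
  "Wset c = {w. snd w \<subseteq> {1..c}}"

definition states :: "'v set \<Rightarrow> nat \<Rightarrow> ('v + wstate) set" where
  "states V c = Inl ` V \<union> Inr ` Wset c"

definition jump_rate ::
  "int \<Rightarrow> (int \<Rightarrow> nat \<Rightarrow> real) \<Rightarrow> (int \<Rightarrow> nat \<Rightarrow> real) \<Rightarrow> (int \<Rightarrow> nat \<Rightarrow> real)
   \<Rightarrow> (int \<Rightarrow> nat \<Rightarrow> real) \<Rightarrow> nat \<Rightarrow> wstate \<Rightarrow> wstate \<Rightarrow> real" where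
  "jump_rate K a b cc d i w w' =
     (let k = int (fst w') - int (fst w) in
      if snd w - {i} = snd w' - {i} \<and> k \<le> K then
        (if i \<notin> snd w then (if i \<in> snd w' then a k i else b k i)
         else (if i \<in> snd w' then cc k i else d k i))
      else 0)"

definition wrate ::
  "nat \<Rightarrow> int \<Rightarrow> (int \<Rightarrow> nat \<Rightarrow> real) \<Rightarrow> (int \<Rightarrow> nat \<Rightarrow> real) \<Rightarrow> (int \<Rightarrow> nat \<Rightarrow> real)
   \<Rightarrow> (int \<Rightarrow> nat \<Rightarrow> real) \<Rightarrow> wstate \<Rightarrow> wstate \<Rightarrow> real" where
  "wrate c K a b cc d w w' = (\<Sum>i\<in>{1..c}. jump_rate K a b cc d i w w')"

definition to_V_rate ::
  "nat \<Rightarrow> (int \<Rightarrow> nat \<Rightarrow> real) \<Rightarrow> (int \<Rightarrow> nat \<Rightarrow> real) \<Rightarrow> (int \<Rightarrow> nat \<Rightarrow> real)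
   \<Rightarrow> (int \<Rightarrow> nat \<Rightarrow> real) \<Rightarrow> wstate \<Rightarrow> real" where
  "to_V_rate c a b cc d w =
     (\<Sum>i\<in>{1..c}. \<Sum>\<^sub>\<infinity>k\<in>{..- int (fst w) - 1}.
        (if i \<in> snd w then cc k i + d k i else a k i + b k i))"

definition out_rate :: "'s set \<Rightarrow> ('s \<Rightarrow> 's \<Rightarrow> real) \<Rightarrow> 's \<Rightarrow> real" where
  "out_rate S Q x = (\<Sum>\<^sub>\<infinity>y\<in>S - {x}. Q x y)"

definition irreducible_chain :: "'s set \<Rightarrow> ('s \<Rightarrow> 's \<Rightarrow> real) \<Rightarrow> bool" where
  "irreducible_chain S Q \<longleftrightarrow>
     (\<forall>x\<in>S. \<forall>y\<in>S. (\<lambda>u v. u \<in> S \<and> v \<in> S \<and> u \<noteq> v \<and> Q u v > 0)\<^sup>*\<^sup>* x y)"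

definition is_equilibrium :: "'s set \<Rightarrow> ('s \<Rightarrow> 's \<Rightarrow> real) \<Rightarrow> ('s \<Rightarrow> real) \<Rightarrow> bool" where
  "is_equilibrium S Q p \<longleftrightarrow>
     (\<forall>x\<in>S. p x \<ge> 0) \<and> (p has_sum 1) S \<and>
     (\<forall>x\<in>S. p x * out_rate S Q x = (\<Sum>\<^sub>\<infinity>y\<in>S - {x}. p y * Q y x))"

definition inner_eqs ::
  "nat \<Rightarrow> int \<Rightarrow> (int \<Rightarrow> nat \<Rightarrow> real) \<Rightarrow> (int \<Rightarrow> nat \<Rightarrow> real) \<Rightarrow> (int \<Rightarrow> nat \<Rightarrow> real)
   \<Rightarrow> (int \<Rightarrow> nat \<Rightarrow> real) \<Rightarrow> (wstate \<Rightarrow> complex) \<Rightarrow> bool" where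
  "inner_eqs c K a b cc d q \<longleftrightarrow>
    (\<forall>n0 A. (n0, A) \<in> Wset c \<and> int n0 \<ge> K \<longrightarrow>
      (\<Sum>i\<in>{1..c}. \<Sum>\<^sub>\<infinity>k\<in>{..K}.
          complex_of_real (if i \<in> A then cc k i + d k i else a k i + b k i)) * q (n0, A)
      = (\<Sum>i\<in>{1..c}. \<Sum>\<^sub>\<infinity>k\<in>{..K}.
          (if i \<notin> A then
             complex_of_real (b k i) * q (nat (int n0 - k), A)
             + complex_of_real (d k i) * q (nat (int n0 - k), insert i A)
           else
             complex_of_real (a k i) * q (nat (int n0 - k), A - {i})
             + complex_of_real (cc k i) * q (nat (int n0 - k), A))))"

definition cand :: "nat \<Rightarrow> (nat \<Rightarrow> wstate \<Rightarrow> complex) \<Rightarrow> (nat \<Rightarrow> complex)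
    \<Rightarrow> ('v \<Rightarrow> complex) \<Rightarrow> 'v + wstate \<Rightarrow> complex" where
  "cand N P \<beta> u x = (case x of Inl v \<Rightarrow> u v | Inr w \<Rightarrow> (\<Sum>j<N. \<beta> j * P j w))"

definition boundary_sys ::
  "'v set \<Rightarrow> nat \<Rightarrow> int \<Rightarrow> ('v + wstate \<Rightarrow> 'v + wstate \<Rightarrow> real) \<Rightarrow> nat \<Rightarrow> (nat \<Rightarrow> wstate \<Rightarrow> complex)
   \<Rightarrow> (nat \<Rightarrow> complex) \<Rightarrow> ('v \<Rightarrow> complex) \<Rightarrow> bool" where
  "boundary_sys V c K Q N P \<beta> u \<longleftrightarrow>
     (\<forall>x\<in>states V c. (case x of Inl _ \<Rightarrow> True | Inr w \<Rightarrow> int (fst w) < K) \<longrightarrow>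
        cand N P \<beta> u x * complex_of_real (out_rate (states V c) Q x)
        = (\<Sum>\<^sub>\<infinity>y\<in>states V c - {x}. cand N P \<beta> u y * complex_of_real (Q y x)))
     \<and> (\<Sum>\<^sub>\<infinity>x\<in>states V c. cand N P \<beta> u x) = 1"

end

theory Submission
  imports Defs "Jordan_Normal_Form.Determinant"
begin

text \<open>For an irreducible chain with bounded rates, every absolutely summable solution of
  the global balance equations is a multiple of the equilibrium distribution: its positive
  part is again a solution (flux is conserved), and positivity propagates along the
  transitions. Completing any combination \<open>\<Sum>\<^sub>j \<beta>\<^sub>j P\<^sub>j\<close> by arbitrary values on \<open>V\<close>
  gives a function that is balanced at every state of \<open>W\<close> of level at least \<open>K\<close>, by the
  inner equations and because \<open>V\<close> does not jump there. The remaining balance equations,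
  at \<open>V\<close> and at the \<open>2\<^sup>c K\<close> states of \<open>W\<close> below level \<open>K\<close>, form a square linear system
  in the \<open>2\<^sup>c K\<close> coefficients and the values on \<open>V\<close>; by conservation of flux its equations
  sum to zero, so it has a nonzero solution, which is then a nonzero multiple of \<open>p\<close>.
  Uniqueness of the coefficients is the linear independence of the \<open>P\<^sub>j\<close>.\<close>

lemma has_sum_diff:
  fixes f g :: "'a \<Rightarrow> 'b::topological_ab_group_add"
  assumes "(f has_sum s) A" and "(g has_sum t) A"
  shows "((\<lambda>x. f x - g x) has_sum (s - t)) A"
proof -
  have "((\<lambda>x. - g x) has_sum (- t)) A"
    using assms(2) by (simp add: has_sum_uminus)
  from has_sum_add[OF assms(1) this] show ?thesis by simp
qed

lemma has_sum_sum:
  fixes f :: "'i \<Rightarrow> 'a \<Rightarrow> 'b::topological_comm_monoid_add"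
  assumes "finite I" and "\<And>i. i \<in> I \<Longrightarrow> (f i has_sum s i) A"
  shows "((\<lambda>x. \<Sum>i\<in>I. f i x) has_sum (\<Sum>i\<in>I. s i)) A"
  using assms by (induction I rule: finite_induct) (auto intro: has_sum_add)

lemma has_sum_Diff_singleton:
  fixes f :: "'a \<Rightarrow> 'b::topological_ab_group_add"
  assumes "(f has_sum s) A" and "x \<in> A"
  shows "(f has_sum (s - f x)) (A - {x})"
proof -
  have "((\<lambda>y. if y = x then f x else 0) has_sum f x) A"
    using assms(2) by (intro has_sum_finiteI[THEN has_sum_cong_neutral[THEN iffD1, rotated -1], of "{x}"]) auto
  from has_sum_diff[OF assms(1) this]
  show ?thesis by (rule has_sum_cong_neutral[THEN iffD1, rotated -1]) auto
qed

section \<open>Balance equations of a chain with bounded rates\<close>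

definition balance_defect ::
  "'s set \<Rightarrow> ('s \<Rightarrow> 's \<Rightarrow> real) \<Rightarrow> ('s \<Rightarrow> 'a::real_normed_vector) \<Rightarrow> 's \<Rightarrow> 'a" where
  "balance_defect S Q f x = out_rate S Q x *\<^sub>R f x - (\<Sum>\<^sub>\<infinity>y\<in>S - {x}. Q y x *\<^sub>R f y)"

lemma balance_defect_eq_0_iff_complex:
  "balance_defect S Q f x = 0 \<longleftrightarrow>
     f x * complex_of_real (out_rate S Q x) = (\<Sum>\<^sub>\<infinity>y\<in>S - {x}. f y * complex_of_real (Q y x))"
  by (simp add: balance_defect_def scaleR_conv_of_real mult.commute)

lemma balance_defect_eq_0_iff_real:
  "balance_defect S Q f x = 0 \<longleftrightarrow> f x * out_rate S Q x = (\<Sum>\<^sub>\<infinity>y\<in>S - {x}. f y * Q y x)"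
  for f :: "'s \<Rightarrow> real"
  by (simp add: balance_defect_def mult.commute)

lemma balance_defect_cong:
  assumes "\<And>y. y \<in> S \<Longrightarrow> f y = g y" and "x \<in> S"
  shows "balance_defect S Q f x = balance_defect S Q g x"
  unfolding balance_defect_def using assms by (auto intro!: infsum_cong)

definition balanced :: "'s set \<Rightarrow> ('s \<Rightarrow> 's \<Rightarrow> real) \<Rightarrow> ('s \<Rightarrow> 'a::real_normed_vector) \<Rightarrow> bool" where
  "balanced S Q f \<longleftrightarrow> (\<forall>x\<in>S. balance_defect S Q f x = 0)"

lemma equilibrium_balanced:
  assumes "is_equilibrium S Q p"
  shows "balanced S Q p"
  using assms by (simp add: is_equilibrium_def balanced_def balance_defect_eq_0_iff_real)

lemma equilibrium_abs_summable:
  assumes "is_equilibrium S Q p"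
  shows "(\<lambda>x. norm (p x)) summable_on S"
  using assms summable_on_cong[of S "\<lambda>x. norm (p x)" p]
  by (auto simp: is_equilibrium_def dest: has_sum_imp_summable)

lemma equilibrium_pos_somewhere:
  assumes "is_equilibrium S Q p"
  shows "\<exists>x\<in>S. p x > 0"
proof (rule ccontr)
  assume "\<not> ?thesis"
  then have "\<forall>x\<in>S. p x = 0"
    using assms by (force simp: is_equilibrium_def)
  then have "(p has_sum 0) S"
    by (simp add: has_sum_0)
  then show False
    using assms has_sum_unique by (fastforce simp: is_equilibrium_def)
qed

locale bounded_rate_chain =
  fixes S :: "'s set" and Q :: "'s \<Rightarrow> 's \<Rightarrow> real" and M :: real
  assumes rate_nonneg: "\<And>x y. x \<in> S \<Longrightarrow> y \<in> S \<Longrightarrow> x \<noteq> y \<Longrightarrow> Q x y \<ge> 0"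
    and rate_summable: "\<And>x. x \<in> S \<Longrightarrow> Q x summable_on (S - {x})"
    and out_rate_le: "\<And>x. x \<in> S \<Longrightarrow> out_rate S Q x \<le> M"
begin

lemma out_rate_nonneg: "x \<in> S \<Longrightarrow> out_rate S Q x \<ge> 0"
  unfolding out_rate_def by (rule infsum_nonneg) (use rate_nonneg in auto)

lemma rate_le_out_rate:
  assumes "x \<in> S" "y \<in> S" "x \<noteq> y"
  shows "Q x y \<le> out_rate S Q x"
  using finite_sum_le_infsum[of "Q x" "S - {x}" "{y}"] assms rate_summable rate_nonneg
  unfolding out_rate_def by auto

lemma inflow_abs_summable:
  assumes f: "(\<lambda>y. norm (f y)) summable_on S" and x: "x \<in> S"
  shows "(\<lambda>y. norm (Q y x *\<^sub>R f y)) summable_on (S - {x})"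
proof -
  have "(\<lambda>y. M * norm (f y)) summable_on (S - {x})"
    using summable_on_subset[OF f] by (intro summable_on_cmult_right) auto
  then show ?thesis
  proof (rule summable_on_comparison_test)
    fix y assume y: "y \<in> S - {x}"
    have "Q y x \<le> out_rate S Q y"
      using y x by (intro rate_le_out_rate) auto
    also have "\<dots> \<le> M"
      using y by (intro out_rate_le) auto
    moreover have "0 \<le> Q y x"
      using y x by (intro rate_nonneg) auto
    ultimately show "norm (Q y x *\<^sub>R f y) \<le> M * norm (f y)"
      by (simp add: mult_right_mono)
  qed simp
qed

lemma inflow_summable:
  fixes f :: "'s \<Rightarrow> 'b::banach"
  assumes "(\<lambda>y. norm (f y)) summable_on S" and "x \<in> S"
  shows "(\<lambda>y. Q y x *\<^sub>R f y) summable_on (S - {x})"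
  by (rule abs_summable_summable[OF inflow_abs_summable[OF assms]])

definition flux :: "('s \<Rightarrow> 'b::real_normed_vector) \<Rightarrow> 's \<times> 's \<Rightarrow> 'b" where
  "flux f = (\<lambda>(y, x). if x = y then 0 else Q y x *\<^sub>R f y)"

lemma flux_row_has_sum:
  assumes "y \<in> S"
  shows "((\<lambda>x. flux f (y, x)) has_sum out_rate S Q y *\<^sub>R f y) S"
proof -
  have "((\<lambda>x. Q y x *\<^sub>R f y) has_sum out_rate S Q y *\<^sub>R f y) (S - {y})"
    unfolding out_rate_def
    using has_sum_bounded_linear[OF bounded_linear_scaleR_left[of "f y"] has_sum_infsum[OF rate_summable[OF assms]]]
    by simp
  then show ?thesis
    by (rule has_sum_cong_neutral[THEN iffD1, rotated -1]) (auto simp: flux_def)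
qed

lemma flux_column_has_sum:
  fixes f :: "'s \<Rightarrow> 'b::banach"
  assumes "(\<lambda>y. norm (f y)) summable_on S" and "x \<in> S"
  shows "((\<lambda>y. flux f (y, x)) has_sum (\<Sum>\<^sub>\<infinity>y\<in>S - {x}. Q y x *\<^sub>R f y)) S"
  using has_sum_infsum[OF inflow_summable[OF assms]]
  by (rule has_sum_cong_neutral[THEN iffD1, rotated -1]) (auto simp: flux_def)

lemma flux_abs_summable:
  assumes f: "(\<lambda>y. norm (f y)) summable_on S"
  shows "(\<lambda>z. norm (flux f z)) summable_on S \<times> S"
proof -
  have row: "((\<lambda>x. norm (flux f (y, x))) has_sum out_rate S Q y * norm (f y)) S" if y: "y \<in> S" for y
  proof -
    have eq: "norm (flux f (y, x)) = flux (\<lambda>y. norm (f y)) (y, x)" if "x \<in> S" for x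
      using rate_nonneg[OF y that] by (auto simp: flux_def)
    have "((\<lambda>x. flux (\<lambda>y. norm (f y)) (y, x)) has_sum out_rate S Q y * norm (f y)) S"
      using flux_row_has_sum[OF y, of "\<lambda>y. norm (f y)"] by simp
    then show ?thesis
      by (rule has_sum_cong[THEN iffD1, rotated]) (simp add: eq)
  qed
  have "(\<lambda>y. norm (\<Sum>\<^sub>\<infinity>x\<in>S. norm (flux f (y, x)))) summable_on S"
  proof (rule summable_on_comparison_test)
    show "(\<lambda>y. M * norm (f y)) summable_on S"
      using f by (rule summable_on_cmult_right)
    fix y assume y: "y \<in> S"
    have "norm (\<Sum>\<^sub>\<infinity>x\<in>S. norm (flux f (y, x))) = out_rate S Q y * norm (f y)"
      using infsumI[OF row[OF y]] out_rate_nonneg[OF y] by simp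
    also have "\<dots> \<le> M * norm (f y)"
      using out_rate_le[OF y] by (simp add: mult_right_mono)
    finally show "norm (\<Sum>\<^sub>\<infinity>x\<in>S. norm (flux f (y, x))) \<le> M * norm (f y)" .
  qed simp
  moreover have "\<forall>y\<in>S. (\<lambda>x. norm (flux f (y, x))) summable_on S"
    using row has_sum_imp_summable by blast
  ultimately show ?thesis
    using Infinite_Sum.abs_summable_on_Sigma_iff[where f="flux f" and A=S and B="\<lambda>_. S"] by simp
qed

text \<open>Conservation of flux: summing the absolutely summable flux first by rows and
  then by columns gives total outflow = total inflow.\<close>
lemma balance_defect_has_sum_0:
  fixes f :: "'s \<Rightarrow> 'b::banach"
  assumes f: "(\<lambda>x. norm (f x)) summable_on S"
  shows "(balance_defect S Q f has_sum 0) S"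
proof -
  obtain T where T: "(flux f has_sum T) (S \<times> S)"
    using abs_summable_summable[OF flux_abs_summable[OF f]] summable_on_def by blast
  have "((\<lambda>y. out_rate S Q y *\<^sub>R f y) has_sum T) S"
    using has_sum_SigmaD[OF T flux_row_has_sum] .
  moreover have "((\<lambda>x. \<Sum>\<^sub>\<infinity>y\<in>S - {x}. Q y x *\<^sub>R f y) has_sum T) S"
  proof (rule has_sum_SigmaD)
    show "((\<lambda>(x, y). flux f (y, x)) has_sum T) (S \<times> S)"
      using has_sum_swap[THEN iffD1, OF T] .
  qed (use flux_column_has_sum[OF f] in simp)
  ultimately have "((\<lambda>x. out_rate S Q x *\<^sub>R f x - (\<Sum>\<^sub>\<infinity>y\<in>S - {x}. Q y x *\<^sub>R f y)) has_sum T - T) S"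
    by (rule has_sum_diff)
  then show ?thesis
    by (simp add: balance_defect_def[abs_def])
qed

lemma balance_defect_bounded_linear:
  fixes f :: "'s \<Rightarrow> 'b::banach" and L :: "'b \<Rightarrow> 'c::real_normed_vector"
  assumes L: "bounded_linear L" and f: "(\<lambda>y. norm (f y)) summable_on S" and x: "x \<in> S"
  shows "balance_defect S Q (\<lambda>y. L (f y)) x = L (balance_defect S Q f x)"
proof -
  interpret bounded_linear L by (fact L)
  have "((\<lambda>y. L (Q y x *\<^sub>R f y)) has_sum L (\<Sum>\<^sub>\<infinity>y\<in>S - {x}. Q y x *\<^sub>R f y)) (S - {x})"
    using has_sum_bounded_linear[OF L has_sum_infsum[OF inflow_summable[OF f x]]] .
  then have "(\<Sum>\<^sub>\<infinity>y\<in>S - {x}. Q y x *\<^sub>R L (f y)) = L (\<Sum>\<^sub>\<infinity>y\<in>S - {x}. Q y x *\<^sub>R f y)"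
    by (simp add: infsumI scaleR)
  then show ?thesis
    by (simp add: balance_defect_def diff scaleR)
qed

lemma balance_defect_sum:
  fixes f :: "'i \<Rightarrow> 's \<Rightarrow> 'b::banach"
  assumes I: "finite I" and f: "\<And>i. i \<in> I \<Longrightarrow> (\<lambda>y. norm (f i y)) summable_on S" and x: "x \<in> S"
  shows "balance_defect S Q (\<lambda>y. \<Sum>i\<in>I. f i y) x = (\<Sum>i\<in>I. balance_defect S Q (f i) x)"
proof -
  have "((\<lambda>y. \<Sum>i\<in>I. Q y x *\<^sub>R f i y) has_sum (\<Sum>i\<in>I. \<Sum>\<^sub>\<infinity>y\<in>S - {x}. Q y x *\<^sub>R f i y)) (S - {x})"
    using I by (rule has_sum_sum) (use inflow_summable[OF f x] in auto)
  then have "(\<Sum>\<^sub>\<infinity>y\<in>S - {x}. Q y x *\<^sub>R (\<Sum>i\<in>I. f i y)) = (\<Sum>i\<in>I. \<Sum>\<^sub>\<infinity>y\<in>S - {x}. Q y x *\<^sub>R f i y)"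
    by (simp add: infsumI scaleR_sum_right)
  then show ?thesis
    by (simp add: balance_defect_def scaleR_sum_right sum_subtractf)
qed

lemma balance_defect_diff:
  fixes f g :: "'s \<Rightarrow> 'b::banach"
  assumes f: "(\<lambda>y. norm (f y)) summable_on S" and g: "(\<lambda>y. norm (g y)) summable_on S" and x: "x \<in> S"
  shows "balance_defect S Q (\<lambda>y. f y - g y) x = balance_defect S Q f x - balance_defect S Q g x"
proof -
  have "((\<lambda>y. Q y x *\<^sub>R f y - Q y x *\<^sub>R g y) has_sum
      (\<Sum>\<^sub>\<infinity>y\<in>S - {x}. Q y x *\<^sub>R f y) - (\<Sum>\<^sub>\<infinity>y\<in>S - {x}. Q y x *\<^sub>R g y)) (S - {x})"
    using inflow_summable[OF f x] inflow_summable[OF g x] by (intro has_sum_diff has_sum_infsum)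
  then have "(\<Sum>\<^sub>\<infinity>y\<in>S - {x}. Q y x *\<^sub>R (f y - g y))
      = (\<Sum>\<^sub>\<infinity>y\<in>S - {x}. Q y x *\<^sub>R f y) - (\<Sum>\<^sub>\<infinity>y\<in>S - {x}. Q y x *\<^sub>R g y)"
    by (simp add: infsumI scaleR_diff_right)
  then show ?thesis
    by (simp add: balance_defect_def scaleR_diff_right)
qed

lemma balance_defect_lincomb:
  fixes f :: "'i \<Rightarrow> 's \<Rightarrow> complex"
  assumes I: "finite I" and f: "\<And>i. i \<in> I \<Longrightarrow> (\<lambda>y. norm (f i y)) summable_on S" and x: "x \<in> S"
  shows "balance_defect S Q (\<lambda>y. \<Sum>i\<in>I. v i * f i y) x = (\<Sum>i\<in>I. v i * balance_defect S Q (f i) x)"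
proof -
  have "(\<lambda>y. norm (v i * f i y)) summable_on S" if "i \<in> I" for i
    using summable_on_cmult_right[OF f[OF that], of "norm (v i)"] by (simp add: norm_mult)
  then have "balance_defect S Q (\<lambda>y. \<Sum>i\<in>I. v i * f i y) x = (\<Sum>i\<in>I. balance_defect S Q (\<lambda>y. v i * f i y) x)"
    by (rule balance_defect_sum[OF I _ x])
  also have "\<dots> = (\<Sum>i\<in>I. v i * balance_defect S Q (f i) x)"
    using balance_defect_bounded_linear[OF bounded_linear_mult_right f x] by simp
  finally show ?thesis .
qed

text \<open>The defect of the positive part is nonpositive everywhere, and the defects sum to
  zero by conservation.\<close>
lemma balanced_pos_part:
  fixes f :: "'s \<Rightarrow> real"
  assumes f: "(\<lambda>x. norm (f x)) summable_on S" and bal: "balanced S Q f"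
  shows "balanced S Q (\<lambda>x. max (f x) 0)"
proof -
  define h where "h = (\<lambda>x. max (f x) 0)"
  have h: "(\<lambda>x. norm (h x)) summable_on S"
    using f by (rule summable_on_comparison_test) (auto simp: h_def)
  have inflow_mono: "(\<Sum>\<^sub>\<infinity>y\<in>S - {x}. Q y x * f y) \<le> (\<Sum>\<^sub>\<infinity>y\<in>S - {x}. Q y x * h y)" if x: "x \<in> S" for x
    using inflow_summable[OF f x] inflow_summable[OF h x]
    by (intro infsum_mono) (use rate_nonneg x in \<open>auto simp: h_def intro: mult_left_mono\<close>)
  have inflow_nonneg: "0 \<le> (\<Sum>\<^sub>\<infinity>y\<in>S - {x}. Q y x * h y)" if x: "x \<in> S" for x
    by (rule infsum_nonneg) (use rate_nonneg x in \<open>auto simp: h_def\<close>)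
  have nonpos: "- balance_defect S Q h x \<ge> 0" if x: "x \<in> S" for x
  proof (cases "f x \<le> 0")
    case True
    then show ?thesis using inflow_nonneg[OF x] by (simp add: balance_defect_def h_def)
  next
    case False
    then have "out_rate S Q x * h x = (\<Sum>\<^sub>\<infinity>y\<in>S - {x}. Q y x * f y)"
      using bal x by (simp add: balanced_def balance_defect_def h_def)
    then show ?thesis using inflow_mono[OF x] by (simp add: balance_defect_def)
  qed
  have sum0: "((\<lambda>x. - balance_defect S Q h x) has_sum 0) S"
    using balance_defect_has_sum_0[OF h] by (simp add: has_sum_uminus)
  have "- balance_defect S Q h x = 0" if "x \<in> S" for x
    using sum0 order.refl nonpos that by (rule nonneg_has_sum_le_0D)
  then show ?thesis
    unfolding balanced_def h_def[symmetric] by simp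
qed

lemma balanced_nonneg_pos_step:
  fixes g :: "'s \<Rightarrow> real"
  assumes g: "(\<lambda>x. norm (g x)) summable_on S" "\<And>x. x \<in> S \<Longrightarrow> g x \<ge> 0" "balanced S Q g"
    and uv: "u \<in> S" "v \<in> S" "u \<noteq> v" "Q u v > 0" "g u > 0"
  shows "g v > 0"
proof -
  have "0 < Q u v * g u" using uv by simp
  also have "\<dots> \<le> (\<Sum>\<^sub>\<infinity>y\<in>S - {v}. Q y v * g y)"
    using finite_sum_le_infsum[of "\<lambda>y. Q y v * g y" "S - {v}" "{u}"] inflow_summable[OF g(1) uv(2)]
      rate_nonneg g(2) uv by auto
  also have "\<dots> = out_rate S Q v * g v"
    using g(3) uv(2) by (simp add: balanced_def balance_defect_def)
  finally show ?thesis
    using out_rate_nonneg[OF uv(2)] by (simp add: zero_less_mult_iff)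
qed

lemma balanced_vanishing_imp_nonpos:
  fixes f :: "'s \<Rightarrow> real"
  assumes irr: "irreducible_chain S Q"
    and f: "(\<lambda>x. norm (f x)) summable_on S" "balanced S Q f"
    and x0: "x0 \<in> S" "f x0 = 0"
  shows "\<forall>x\<in>S. f x \<le> 0"
proof (rule ballI, rule ccontr)
  define h where "h x = max (f x) 0" for x
  have h: "(\<lambda>x. norm (h x)) summable_on S" "\<And>x. x \<in> S \<Longrightarrow> h x \<ge> 0" "balanced S Q h"
    using summable_on_comparison_test[OF f(1)] balanced_pos_part[OF f] by (auto simp: h_def[abs_def])
  fix y assume "y \<in> S" "\<not> f y \<le> 0"
  then have "(\<lambda>u v. u \<in> S \<and> v \<in> S \<and> u \<noteq> v \<and> Q u v > 0)\<^sup>*\<^sup>* y x0" "h y > 0"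
    using irr x0 by (auto simp: irreducible_chain_def h_def)
  then have "h x0 > 0"
    by (induction rule: rtranclp_induct) (auto intro: balanced_nonneg_pos_step[OF h])
  with x0 show False by (simp add: h_def)
qed

lemma balanced_vanishing_imp_zero:
  fixes f :: "'s \<Rightarrow> real"
  assumes irr: "irreducible_chain S Q"
    and f: "(\<lambda>x. norm (f x)) summable_on S" "balanced S Q f"
    and x0: "x0 \<in> S" "f x0 = 0"
  shows "\<forall>x\<in>S. f x = 0"
proof -
  have "(\<lambda>x. norm (- f x)) summable_on S"
    using f(1) by simp
  moreover have "balanced S Q (\<lambda>x. - f x)"
    using balance_defect_bounded_linear[OF bounded_linear_minus[OF bounded_linear_ident] f(1)] f(2)
    by (simp add: balanced_def)
  ultimately have "\<forall>x\<in>S. - f x \<le> 0"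
    using x0 by (intro balanced_vanishing_imp_nonpos[OF irr]) auto
  with balanced_vanishing_imp_nonpos[OF irr f x0] show ?thesis
    by force
qed

lemma balanced_real_eq_multiple:
  fixes r :: "'s \<Rightarrow> real"
  assumes irr: "irreducible_chain S Q" and p: "is_equilibrium S Q p"
    and r: "(\<lambda>x. norm (r x)) summable_on S" "balanced S Q r"
  shows "\<forall>x\<in>S. r x = infsum r S * p x"
proof -
  obtain x0 where x0: "x0 \<in> S" "p x0 > 0"
    using equilibrium_pos_somewhere[OF p] by blast
  have pN: "(\<lambda>x. norm (p x)) summable_on S"
    using p by (rule equilibrium_abs_summable)
  define t where "t = r x0 / p x0"
  have tpN: "(\<lambda>x. norm (t * p x)) summable_on S"
    using summable_on_cmult_right[OF pN, of "\<bar>t\<bar>"] by (simp add: abs_mult)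
  have "(\<lambda>x. norm (r x - t * p x)) summable_on S"
    using summable_on_add[OF r(1) tpN]
    by (rule summable_on_comparison_test) (auto simp: abs_triangle_ineq4)
  moreover have "balanced S Q (\<lambda>x. r x - t * p x)"
    using balance_defect_diff[OF r(1) tpN] balance_defect_bounded_linear[OF bounded_linear_mult_right pN]
      r(2) equilibrium_balanced[OF p]
    by (simp add: balanced_def)
  moreover have "r x0 - t * p x0 = 0"
    using x0(2) by (simp add: t_def)
  ultimately have "\<forall>x\<in>S. r x - t * p x = 0"
    by (rule balanced_vanishing_imp_zero[OF irr _ _ x0(1)])
  then have rt: "\<forall>x\<in>S. r x = t * p x"
    by simp
  then have "infsum r S = t"
    using p by (simp add: infsum_cong[of S r "\<lambda>x. t * p x"] infsum_cmult_right' is_equilibrium_def infsumI)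
  with rt show ?thesis by simp
qed

lemma balanced_eq_multiple:
  fixes r :: "'s \<Rightarrow> complex"
  assumes irr: "irreducible_chain S Q" and p: "is_equilibrium S Q p"
    and r: "(\<lambda>x. norm (r x)) summable_on S" "balanced S Q r"
  shows "\<forall>x\<in>S. r x = infsum r S * complex_of_real (p x)"
proof
  fix x assume x: "x \<in> S"
  have "(\<lambda>x. norm (Re (r x))) summable_on S" "(\<lambda>x. norm (Im (r x))) summable_on S"
    using r(1) by (auto intro: summable_on_comparison_test simp: abs_Re_le_cmod abs_Im_le_cmod)
  moreover have "balanced S Q (\<lambda>x. Re (r x))" "balanced S Q (\<lambda>x. Im (r x))"
    using balance_defect_bounded_linear[OF bounded_linear_Re r(1)]
      balance_defect_bounded_linear[OF bounded_linear_Im r(1)] r(2)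
    by (auto simp: balanced_def)
  ultimately have "Re (r x) = infsum (\<lambda>x. Re (r x)) S * p x" "Im (r x) = infsum (\<lambda>x. Im (r x)) S * p x"
    using balanced_real_eq_multiple[OF irr p] x by auto
  moreover have "r summable_on S"
    using r(1) by (rule abs_summable_summable)
  ultimately show "r x = infsum r S * complex_of_real (p x)"
    by (simp add: complex_eq_iff infsum_Re infsum_Im)
qed

end

section \<open>A square system whose columns sum to zero\<close>

lemma det_zero_if_column_sums_zero:
  fixes A :: "'a::field mat"
  assumes A: "A \<in> carrier_mat n n" and n: "n > 0"
    and cols: "\<And>l. l < n \<Longrightarrow> (\<Sum>k\<in>{0..<n}. A $$ (k, l)) = 0"
  shows "Determinant.det A = 0"
proof -
  define one where "one = Matrix.vec n (\<lambda>_. 1 :: 'a)"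
  have "transpose_mat A *\<^sub>v one = 0\<^sub>v n"
    using A cols by (intro eq_vecI) (auto simp: one_def scalar_prod_def)
  moreover have "one \<noteq> 0\<^sub>v n"
    using n unfolding one_def by (metis index_vec index_zero_vec(1) zero_neq_one)
  moreover have "one \<in> carrier_vec n" "transpose_mat A \<in> carrier_mat n n"
    using A by (simp_all add: one_def)
  ultimately have "Determinant.det (transpose_mat A) = 0"
    using det_0_iff_vec_prod_zero_field by blast
  then show ?thesis
    using det_transpose[OF A] by simp
qed

lemma zero_column_sums_imp_kernel:
  fixes m :: "'b \<Rightarrow> 'i \<Rightarrow> 'a::field"
  assumes I: "finite I" "I \<noteq> {}" and card: "card B = card I"
    and cols: "\<And>i. i \<in> I \<Longrightarrow> (\<Sum>b\<in>B. m b i) = 0"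
  shows "\<exists>v. (\<exists>i\<in>I. v i \<noteq> 0) \<and> (\<forall>b\<in>B. (\<Sum>i\<in>I. m b i * v i) = 0)"
proof -
  define n where "n = card I"
  have "finite B" "n > 0"
    using I card by (auto simp: n_def card_gt_0_iff intro: card_ge_0_finite)
  obtain eI where eI: "bij_betw eI {0..<n} I"
    using ex_bij_betw_nat_finite[OF I(1)] by (auto simp: n_def)
  obtain eB where eB: "bij_betw eB {0..<n} B"
    using ex_bij_betw_nat_finite[OF \<open>finite B\<close>] card by (auto simp: n_def)
  define A where "A = Matrix.mat n n (\<lambda>(k, l). m (eB k) (eI l))"
  have A: "A \<in> carrier_mat n n" by (simp add: A_def)
  have "(\<Sum>k\<in>{0..<n}. A $$ (k, l)) = 0" if "l < n" for l
  proof -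
    have "eI l \<in> I"
      using bij_betw_apply[OF eI] that by simp
    then show ?thesis
      using sum.reindex_bij_betw[OF eB, of "\<lambda>b. m b (eI l)"] cols that by (simp add: A_def)
  qed
  then have "Determinant.det A = 0"
    using A \<open>n > 0\<close> by (rule det_zero_if_column_sums_zero[rotated 2])
  then obtain w where w: "w \<in> carrier_vec n" "w \<noteq> 0\<^sub>v n" "A *\<^sub>v w = 0\<^sub>v n"
    using det_0_iff_vec_prod_zero_field[OF A] by blast
  obtain l0 where l0: "l0 < n" "w $ l0 \<noteq> 0"
    using w(1,2) by (metis carrier_vecD eq_vecI index_zero_vec)
  define v where "v i = w $ inv_into {0..<n} eI i" for i
  have v_eI: "v (eI l) = w $ l" if "l < n" for l
    using that eI by (simp add: v_def bij_betw_inv_into_left)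
  have "eI l0 \<in> I" "v (eI l0) \<noteq> 0"
    using l0 eI v_eI by (auto simp: bij_betw_def)
  moreover have "(\<Sum>i\<in>I. m b i * v i) = 0" if b: "b \<in> B" for b
  proof -
    obtain k where k: "k < n" "eB k = b"
      using b eB by (auto simp: bij_betw_def)
    have "(\<Sum>i\<in>I. m b i * v i) = (\<Sum>l\<in>{0..<n}. m b (eI l) * v (eI l))"
      by (rule sum.reindex_bij_betw[OF eI, symmetric])
    also have "\<dots> = (A *\<^sub>v w) $ k"
      using k w(1) by (simp add: A_def scalar_prod_def v_eI)
    finally show ?thesis using w(3) k by simp
  qed
  ultimately show ?thesis by blast
qed

section \<open>Transition rates of the level process\<close>

lemma has_sum_up_to_level:
  fixes g :: "int \<Rightarrow> 'b::topological_comm_monoid_add"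
  shows "((\<lambda>m::nat. if int m - int n0 \<le> K then g (int m - int n0) else 0)
           has_sum (\<Sum>k\<in>{- int n0..K}. g k)) UNIV"
proof -
  have "((\<lambda>k. if k \<le> K then g k else 0) has_sum (\<Sum>k\<in>{- int n0..K}. g k)) {- int n0..}"
    by (rule has_sum_finiteI[THEN has_sum_cong_neutral[THEN iffD1, rotated -1], of "{- int n0..K}"]) auto
  moreover have "bij_betw (\<lambda>m::nat. int m - int n0) UNIV {- int n0..}"
    by (rule bij_betwI[where g="\<lambda>k. nat (k + int n0)"]) auto
  ultimately show ?thesis
    using has_sum_reindex_bij_betw by fastforce
qed

lemma has_sum_from_levels_above:
  fixes g :: "int \<Rightarrow> 'b::topological_comm_monoid_add"
  assumes "K \<le> int n0" and "(g has_sum s) {..K}"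
  shows "((\<lambda>m::nat. if int n0 - int m \<le> K then g (int n0 - int m) else 0) has_sum s) UNIV"
proof -
  have "((\<lambda>k. if k \<le> K then g k else 0) has_sum s) {..int n0}"
    using assms(2) by (rule has_sum_cong_neutral[THEN iffD1, rotated -1]) (use assms(1) in auto)
  moreover have "bij_betw (\<lambda>m::nat. int n0 - int m) UNIV {..int n0}"
    by (rule bij_betwI[where g="\<lambda>k. nat (int n0 - k)"]) auto
  ultimately show ?thesis
    using has_sum_reindex_bij_betw by fastforce
qed

text \<open>A jump of coordinate \<open>i\<close> connects phase set \<open>A\<close> only with the two lines of \<open>W\<close>
  carrying the phase sets \<open>insert i A\<close> and \<open>A - {i}\<close>.\<close>
lemma has_sum_Wset_two_lines:
  fixes F :: "wstate \<Rightarrow> 'b::topological_comm_monoid_add"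
  assumes A: "A \<subseteq> {1..c}" and i: "i \<in> {1..c}"
    and on: "((\<lambda>m. F (m, insert i A)) has_sum s) UNIV" "((\<lambda>m. F (m, A - {i})) has_sum t) UNIV"
    and off: "\<And>m B. B - {i} \<noteq> A - {i} \<Longrightarrow> F (m, B) = 0"
  shows "(F has_sum (s + t)) (Wset c)"
proof -
  define L where "L B = range (\<lambda>m::nat. (m, B))" for B :: "nat set"
  have line: "(F has_sum s) (L (insert i A))" "(F has_sum t) (L (A - {i}))"
    using on by (auto simp: L_def has_sum_reindex inj_on_def o_def)
  have "(F has_sum (s + t)) (L (insert i A) \<union> L (A - {i}))"
    using line by (rule has_sum_Un_disjoint) (auto simp: L_def)
  then show ?thesis
  proof (rule has_sum_cong_neutral[THEN iffD1, rotated -1])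
    fix w assume w: "w \<in> Wset c - (L (insert i A) \<union> L (A - {i}))"
    obtain m B where mB: "w = (m, B)" by fastforce
    have "B \<noteq> insert i A" "B \<noteq> A - {i}"
      using w by (auto simp: mB L_def)
    then have "B - {i} \<noteq> A - {i}" by blast
    then show "F w = 0" by (simp add: mB off)
  qed (use A i in \<open>auto simp: L_def Wset_def\<close>)
qed

lemma jump_rate_eq_0:
  "snd w - {i} \<noteq> snd w' - {i} \<Longrightarrow> jump_rate K a b cc d i w w' = 0"
  by (simp add: jump_rate_def Let_def)

definition shift_rate ::
  "(int \<Rightarrow> nat \<Rightarrow> real) \<Rightarrow> (int \<Rightarrow> nat \<Rightarrow> real) \<Rightarrow> (int \<Rightarrow> nat \<Rightarrow> real)
   \<Rightarrow> (int \<Rightarrow> nat \<Rightarrow> real) \<Rightarrow> nat \<Rightarrow> nat set \<Rightarrow> int \<Rightarrow> real" where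
  "shift_rate a b cc d i A k = (if i \<in> A then cc k i + d k i else a k i + b k i)"

lemma summable_on_mult_bounded:
  fixes g :: "'i \<Rightarrow> complex" and r :: "'i \<Rightarrow> real"
  assumes r: "r summable_on I" "\<And>k. k \<in> I \<Longrightarrow> r k \<ge> 0"
    and g: "\<And>k. k \<in> I \<Longrightarrow> norm (g k) \<le> C"
  shows "(\<lambda>k. complex_of_real (r k) * g k) summable_on I"
proof -
  have "(\<lambda>k. C * r k) summable_on I"
    using r(1) by (rule summable_on_cmult_right)
  then have "(\<lambda>k. norm (complex_of_real (r k) * g k)) summable_on I"
  proof (rule summable_on_comparison_test)
    fix k assume "k \<in> I"
    then show "norm (complex_of_real (r k) * g k) \<le> C * r k"
      using r(2)[of k] g[of k] mult_left_mono[of "norm (g k)" C "r k"]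
      by (simp add: norm_mult mult.commute)
  qed simp
  then show ?thesis by (rule abs_summable_summable)
qed

locale phase_rates =
  fixes c :: nat and K :: int and a b cc d :: "int \<Rightarrow> nat \<Rightarrow> real"
  assumes K_pos: "K \<ge> 1"
    and rates_nonneg: "\<And>k i. i \<in> {1..c} \<Longrightarrow> k \<le> K \<Longrightarrow>
           a k i \<ge> 0 \<and> b k i \<ge> 0 \<and> cc k i \<ge> 0 \<and> d k i \<ge> 0"
    and rates_finite: "\<And>i. i \<in> {1..c} \<Longrightarrow>
           (\<lambda>k. a k i) summable_on {..K} \<and> (\<lambda>k. b k i) summable_on {..K} \<and>
           (\<lambda>k. cc k i) summable_on {..K} \<and> (\<lambda>k. d k i) summable_on {..K}"
begin

lemma shift_rate_summable: "i \<in> {1..c} \<Longrightarrow> shift_rate a b cc d i A summable_on {..K}"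
  using rates_finite[of i] unfolding shift_rate_def by (cases "i \<in> A") (auto intro: summable_on_add)

lemma jump_rate_diag_nonneg: "i \<in> {1..c} \<Longrightarrow> jump_rate K a b cc d i w w \<ge> 0"
  using rates_nonneg[of i 0] K_pos unfolding jump_rate_def Let_def by auto

lemma rate_weighted_summable:
  fixes q :: "wstate \<Rightarrow> complex"
  assumes r: "r \<in> {a, b, cc, d}" and i: "i \<in> {1..c}" and B: "B \<subseteq> {1..c}"
    and q: "\<And>w. w \<in> Wset c \<Longrightarrow> norm (q w) \<le> C"
  shows "(\<lambda>k. complex_of_real (r k i) * q (nat (int n0 - k), B)) summable_on {..K}"
proof (rule summable_on_mult_bounded)
  show "(\<lambda>k. r k i) summable_on {..K}"
    using rates_finite[OF i] r by auto
  show "r k i \<ge> 0" if "k \<in> {..K}" for k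
    using rates_nonneg[OF i, of k] r that by auto
  show "norm (q (nat (int n0 - k), B)) \<le> C" for k
    using q B by (simp add: Wset_def)
qed

lemma jump_rate_row_has_sum:
  assumes A: "A \<subseteq> {1..c}" and i: "i \<in> {1..c}"
  shows "((\<lambda>w'. jump_rate K a b cc d i (n0, A) w')
           has_sum (\<Sum>k\<in>{- int n0..K}. shift_rate a b cc d i A k)) (Wset c)"
proof -
  define up where "up k = (if i \<in> A then cc k i else a k i)" for k
  define down where "down k = (if i \<in> A then d k i else b k i)" for k
  have "jump_rate K a b cc d i (n0, A) (m, insert i A) = (if int m - int n0 \<le> K then up (int m - int n0) else 0)"
    and "jump_rate K a b cc d i (n0, A) (m, A - {i}) = (if int m - int n0 \<le> K then down (int m - int n0) else 0)"
    for m by (simp_all add: jump_rate_def Let_def up_def down_def)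
  then have "((\<lambda>m. jump_rate K a b cc d i (n0, A) (m, insert i A)) has_sum (\<Sum>k\<in>{- int n0..K}. up k)) UNIV"
    and "((\<lambda>m. jump_rate K a b cc d i (n0, A) (m, A - {i})) has_sum (\<Sum>k\<in>{- int n0..K}. down k)) UNIV"
    using has_sum_up_to_level[of n0 K up] has_sum_up_to_level[of n0 K down] by simp_all
  moreover have "jump_rate K a b cc d i (n0, A) (m, B) = 0" if "B - {i} \<noteq> A - {i}" for m B
    using that by (intro jump_rate_eq_0) auto
  ultimately have "((\<lambda>w'. jump_rate K a b cc d i (n0, A) w')
      has_sum (\<Sum>k\<in>{- int n0..K}. up k) + (\<Sum>k\<in>{- int n0..K}. down k)) (Wset c)"
    by (rule has_sum_Wset_two_lines[OF A i])
  moreover have "shift_rate a b cc d i A k = up k + down k" for k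
    by (simp add: shift_rate_def up_def down_def)
  ultimately show ?thesis
    by (simp add: sum.distrib)
qed

definition inner_inflow :: "(wstate \<Rightarrow> complex) \<Rightarrow> nat \<Rightarrow> nat \<Rightarrow> nat set \<Rightarrow> complex" where
  "inner_inflow q i n0 A = (\<Sum>\<^sub>\<infinity>k\<in>{..K}.
     (if i \<notin> A then
        complex_of_real (b k i) * q (nat (int n0 - k), A)
        + complex_of_real (d k i) * q (nat (int n0 - k), insert i A)
      else
        complex_of_real (a k i) * q (nat (int n0 - k), A - {i})
        + complex_of_real (cc k i) * q (nat (int n0 - k), A)))"

lemma jump_rate_column_has_sum:
  fixes q :: "wstate \<Rightarrow> complex"
  assumes A: "A \<subseteq> {1..c}" and i: "i \<in> {1..c}" and n0: "K \<le> int n0"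
    and q: "\<And>w. w \<in> Wset c \<Longrightarrow> norm (q w) \<le> C"
  shows "((\<lambda>w'. q w' * complex_of_real (jump_rate K a b cc d i w' (n0, A)))
           has_sum inner_inflow q i n0 A) (Wset c)"
proof -
  define stay where "stay = (if i \<in> A then cc else d)"
  define move where "move = (if i \<in> A then a else b)"
  define fT where "fT k = complex_of_real (stay k i) * q (nat (int n0 - k), insert i A)" for k
  define fF where "fF k = complex_of_real (move k i) * q (nat (int n0 - k), A - {i})" for k
  have fT: "fT summable_on {..K}" and fF: "fF summable_on {..K}"
    unfolding fT_def fF_def using A i
    by (auto intro!: rate_weighted_summable q simp: stay_def move_def)
  have "q (m, insert i A) * complex_of_real (jump_rate K a b cc d i (m, insert i A) (n0, A))
      = (if int n0 - int m \<le> K then fT (int n0 - int m) else 0)"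
    and "q (m, A - {i}) * complex_of_real (jump_rate K a b cc d i (m, A - {i}) (n0, A))
      = (if int n0 - int m \<le> K then fF (int n0 - int m) else 0)" for m
    by (auto simp: jump_rate_def Let_def fT_def fF_def stay_def move_def)
  then have "((\<lambda>m. q (m, insert i A) * complex_of_real (jump_rate K a b cc d i (m, insert i A) (n0, A)))
      has_sum infsum fT {..K}) UNIV"
    and "((\<lambda>m. q (m, A - {i}) * complex_of_real (jump_rate K a b cc d i (m, A - {i}) (n0, A)))
      has_sum infsum fF {..K}) UNIV"
    using has_sum_from_levels_above[OF n0 has_sum_infsum[OF fT]]
      has_sum_from_levels_above[OF n0 has_sum_infsum[OF fF]] by simp_all
  moreover have "q (m, B) * complex_of_real (jump_rate K a b cc d i (m, B) (n0, A)) = 0"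
    if "B - {i} \<noteq> A - {i}" for m B
    using that jump_rate_eq_0[of "(m, B)" i "(n0, A)"] by simp
  ultimately have "((\<lambda>w'. q w' * complex_of_real (jump_rate K a b cc d i w' (n0, A)))
      has_sum infsum fT {..K} + infsum fF {..K}) (Wset c)"
    by (rule has_sum_Wset_two_lines[OF A i])
  moreover have "inner_inflow q i n0 A = infsum fT {..K} + infsum fF {..K}"
  proof -
    have "inner_inflow q i n0 A = (\<Sum>\<^sub>\<infinity>k\<in>{..K}. fT k + fF k)"
      unfolding inner_inflow_def
      by (rule infsum_cong) (auto simp: fT_def fF_def stay_def move_def insert_absorb)
    then show ?thesis
      using fT fF by (simp add: infsum_add)
  qed
  ultimately show ?thesis by simp
qed

lemma inner_eqsD:
  assumes "inner_eqs c K a b cc d q" and "(n0, A) \<in> Wset c" and "K \<le> int n0"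
  shows "(\<Sum>i\<in>{1..c}. inner_inflow q i n0 A)
    = q (n0, A) * complex_of_real (\<Sum>i\<in>{1..c}. \<Sum>\<^sub>\<infinity>k\<in>{..K}. shift_rate a b cc d i A k)"
proof -
  have "(\<Sum>\<^sub>\<infinity>k\<in>{..K}. complex_of_real (shift_rate a b cc d i A k))
      = complex_of_real (\<Sum>\<^sub>\<infinity>k\<in>{..K}. shift_rate a b cc d i A k)" if "i \<in> {1..c}" for i
    using has_sum_of_real[OF has_sum_infsum[OF shift_rate_summable[OF that]]] by (rule infsumI)
  then have "(\<Sum>i\<in>{1..c}. \<Sum>\<^sub>\<infinity>k\<in>{..K}. complex_of_real (shift_rate a b cc d i A k))
      = complex_of_real (\<Sum>i\<in>{1..c}. \<Sum>\<^sub>\<infinity>k\<in>{..K}. shift_rate a b cc d i A k)"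
    by (simp add: of_real_sum)
  moreover have "(\<Sum>i\<in>{1..c}. \<Sum>\<^sub>\<infinity>k\<in>{..K}. complex_of_real (shift_rate a b cc d i A k)) * q (n0, A)
      = (\<Sum>i\<in>{1..c}. inner_inflow q i n0 A)"
    using assms unfolding inner_eqs_def inner_inflow_def shift_rate_def by auto
  ultimately show ?thesis by (simp add: mult.commute)
qed

end

lemma Diff_states:
  "states V c - {Inr w} = Inl ` V \<union> Inr ` (Wset c - {w})"
  by (auto simp: states_def)

locale level_process = phase_rates +
  fixes V :: "'v set" and Q :: "'v + wstate \<Rightarrow> 'v + wstate \<Rightarrow> real"
  assumes V_fin: "finite V"
    and Q_WW: "\<And>w w'. w \<in> Wset c \<Longrightarrow> w' \<in> Wset c \<Longrightarrow> w \<noteq> w' \<Longrightarrow>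
           Q (Inr w) (Inr w') = wrate c K a b cc d w w'"
    and Q_WV: "\<And>w. w \<in> Wset c \<Longrightarrow> (\<Sum>v\<in>V. Q (Inr w) (Inl v)) = to_V_rate c a b cc d w"
begin

text \<open>The jumps into \<open>V\<close> are exactly those whose level shift would make \<open>n\<^sub>0\<close>
  negative, so together with the jumps inside \<open>W\<close> they exhaust all shifts \<open>k \<le> K\<close>.\<close>
lemma out_rate_W:
  assumes w: "w \<in> Wset c"
  shows "out_rate (states V c) Q (Inr w)
    = (\<Sum>i\<in>{1..c}. \<Sum>\<^sub>\<infinity>k\<in>{..K}. shift_rate a b cc d i (snd w) k) - (\<Sum>i\<in>{1..c}. jump_rate K a b cc d i w w)"
proof -
  obtain n0 A where wA: "w = (n0, A)" by fastforce
  have A: "A \<subseteq> {1..c}" using w wA by (simp add: Wset_def)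
  define to_V where "to_V i = (\<Sum>\<^sub>\<infinity>k\<in>{..- int n0 - 1}. shift_rate a b cc d i A k)" for i
  define to_W where "to_W i = (\<Sum>k\<in>{- int n0..K}. shift_rate a b cc d i A k)" for i
  have "(Q (Inr w) has_sum to_V_rate c a b cc d w) (Inl ` V)"
    using Q_WV[OF w] V_fin by (subst has_sum_reindex) (auto simp: inj_on_def o_def intro!: has_sum_finiteI)
  moreover have "(Q (Inr w) has_sum (\<Sum>i\<in>{1..c}. to_W i) - (\<Sum>i\<in>{1..c}. jump_rate K a b cc d i w w))
      (Inr ` (Wset c - {w}))"
  proof -
    have "((\<lambda>w'. \<Sum>i\<in>{1..c}. jump_rate K a b cc d i w w') has_sum (\<Sum>i\<in>{1..c}. to_W i)) (Wset c)"
      unfolding wA to_W_def by (rule has_sum_sum) (use jump_rate_row_has_sum[OF A] in auto)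
    from has_sum_Diff_singleton[OF this w]
    have "((\<lambda>w'. Q (Inr w) (Inr w')) has_sum (\<Sum>i\<in>{1..c}. to_W i) - (\<Sum>i\<in>{1..c}. jump_rate K a b cc d i w w))
        (Wset c - {w})"
      by (rule has_sum_cong[THEN iffD1, rotated]) (use Q_WW[OF w] in \<open>auto simp: wrate_def\<close>)
    then show ?thesis
      by (subst has_sum_reindex) (auto simp: inj_on_def o_def)
  qed
  ultimately have "(Q (Inr w) has_sum to_V_rate c a b cc d w + ((\<Sum>i\<in>{1..c}. to_W i)
      - (\<Sum>i\<in>{1..c}. jump_rate K a b cc d i w w))) (states V c - {Inr w})"
    by (subst Diff_states) (rule has_sum_Un_disjoint; auto)
  moreover have "to_V_rate c a b cc d w = (\<Sum>i\<in>{1..c}. to_V i)"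
    by (simp add: to_V_rate_def to_V_def shift_rate_def wA)
  moreover have "(\<Sum>\<^sub>\<infinity>k\<in>{..K}. shift_rate a b cc d i A k) = to_V i + to_W i" if "i \<in> {1..c}" for i
  proof -
    have "{..K} = {..- int n0 - 1} \<union> {- int n0..K}" using K_pos by auto
    moreover have "shift_rate a b cc d i A summable_on {..- int n0 - 1}"
      using shift_rate_summable[OF that] by (rule summable_on_subset) (use K_pos in auto)
    ultimately show ?thesis
      unfolding to_V_def to_W_def by (simp add: infsum_Un_disjoint)
  qed
  ultimately show ?thesis
    unfolding out_rate_def using wA by (simp add: infsumI sum.distrib)
qed

lemma out_rate_W_le:
  assumes w: "w \<in> Wset c"
  shows "out_rate (states V c) Q (Inr w) \<le> (\<Sum>i\<in>{1..c}. \<Sum>\<^sub>\<infinity>k\<in>{..K}. a k i + b k i + cc k i + d k i)"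
proof -
  have "(\<Sum>\<^sub>\<infinity>k\<in>{..K}. shift_rate a b cc d i (snd w) k) \<le> (\<Sum>\<^sub>\<infinity>k\<in>{..K}. a k i + b k i + cc k i + d k i)"
    if i: "i \<in> {1..c}" for i
  proof (rule infsum_mono[OF shift_rate_summable[OF i]])
    show "(\<lambda>k. a k i + b k i + cc k i + d k i) summable_on {..K}"
      using rates_finite[OF i] by (auto intro!: summable_on_add)
    show "shift_rate a b cc d i (snd w) k \<le> a k i + b k i + cc k i + d k i" if "k \<in> {..K}" for k
      using rates_nonneg[OF i, of k] that by (auto simp: shift_rate_def)
  qed
  moreover have "0 \<le> jump_rate K a b cc d i w w" if "i \<in> {1..c}" for i
    using that by (rule jump_rate_diag_nonneg)
  ultimately show ?thesis
    unfolding out_rate_W[OF w] by (smt (verit) sum_mono sum_nonneg)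
qed

lemma inner_eqs_imp_balance_W:
  fixes q :: "wstate \<Rightarrow> complex"
  assumes w: "w \<in> Wset c" and n0: "K \<le> int (fst w)"
    and q: "\<And>w. w \<in> Wset c \<Longrightarrow> norm (q w) \<le> C" and inner: "inner_eqs c K a b cc d q"
  shows "((\<lambda>w'. q w' * complex_of_real (Q (Inr w') (Inr w)))
           has_sum q w * complex_of_real (out_rate (states V c) Q (Inr w))) (Wset c - {w})"
proof -
  obtain n0 A where wA: "w = (n0, A)" by fastforce
  have A: "A \<subseteq> {1..c}" using w wA by (simp add: Wset_def)
  have "((\<lambda>w'. \<Sum>i\<in>{1..c}. q w' * complex_of_real (jump_rate K a b cc d i w' w))
      has_sum (\<Sum>i\<in>{1..c}. inner_inflow q i n0 A)) (Wset c)"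
    unfolding wA by (rule has_sum_sum) (use jump_rate_column_has_sum[OF A _ _ q] n0 wA in auto)
  from has_sum_Diff_singleton[OF this w]
  have "((\<lambda>w'. q w' * complex_of_real (Q (Inr w') (Inr w))) has_sum
      (\<Sum>i\<in>{1..c}. inner_inflow q i n0 A) - (\<Sum>i\<in>{1..c}. q w * complex_of_real (jump_rate K a b cc d i w w)))
      (Wset c - {w})"
    by (rule has_sum_cong[THEN iffD1, rotated]) (auto simp: Q_WW w wrate_def sum_distrib_left)
  moreover have "(\<Sum>i\<in>{1..c}. inner_inflow q i n0 A)
      = q w * complex_of_real (\<Sum>i\<in>{1..c}. \<Sum>\<^sub>\<infinity>k\<in>{..K}. shift_rate a b cc d i A k)"
    using inner_eqsD[OF inner] w n0 wA by simp
  ultimately show ?thesis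
    using out_rate_W[OF w] by (simp add: wA sum_distrib_left right_diff_distrib)
qed

end

section \<open>The boundary equations\<close>

locale boundary_problem = level_process c K a b cc d V Q
  for c K a b cc d and V :: "'v set" and Q +
  fixes p :: "'v + wstate \<Rightarrow> real" and P :: "nat \<Rightarrow> wstate \<Rightarrow> complex"
  assumes Q_nonneg: "\<And>x y. x \<in> states V c \<Longrightarrow> y \<in> states V c \<Longrightarrow> x \<noteq> y \<Longrightarrow> Q x y \<ge> 0"
    and Q_VW: "\<And>v w. v \<in> V \<Longrightarrow> w \<in> Wset c \<Longrightarrow> int (fst w) \<ge> K \<Longrightarrow> Q (Inl v) (Inr w) = 0"
    and Q_finite: "\<And>x. x \<in> states V c \<Longrightarrow> (Q x) summable_on (states V c - {x})"
    and irred: "irreducible_chain (states V c) Q"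
    and equil: "is_equilibrium (states V c) Q p"
    and sol: "\<And>j. j < 2 ^ c * nat K \<Longrightarrow> inner_eqs c K a b cc d (P j)"
    and abs_conv: "\<And>j. j < 2 ^ c * nat K \<Longrightarrow> (\<lambda>w. norm (P j w)) summable_on Wset c"
    and lin_indep: "\<And>\<gamma>. (\<forall>w\<in>Wset c. (\<Sum>j<2 ^ c * nat K. \<gamma> j * P j w) = 0) \<Longrightarrow>
           \<forall>j<2 ^ c * nat K. \<gamma> j = 0"
begin

abbreviation N :: nat where "N \<equiv> 2 ^ c * nat K"

abbreviation S :: "('v + wstate) set" where "S \<equiv> states V c"

definition rate_bound :: real where
  "rate_bound = (\<Sum>i\<in>{1..c}. \<Sum>\<^sub>\<infinity>k\<in>{..K}. a k i + b k i + cc k i + d k i) + (\<Sum>v\<in>V. out_rate S Q (Inl v))"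

sublocale bounded_rate_chain S Q rate_bound
proof
  have out_nonneg: "out_rate S Q x \<ge> 0" if "x \<in> S" for x
    unfolding out_rate_def by (rule infsum_nonneg) (use Q_nonneg that in auto)
  have V_part: "0 \<le> (\<Sum>v\<in>V. out_rate S Q (Inl v))"
    by (rule sum_nonneg) (use out_nonneg in \<open>auto simp: states_def\<close>)
  have W_part: "0 \<le> (\<Sum>i\<in>{1..c}. \<Sum>\<^sub>\<infinity>k\<in>{..K}. a k i + b k i + cc k i + d k i)"
    by (intro sum_nonneg infsum_nonneg) (use rates_nonneg in force)
  fix x assume x: "x \<in> S"
  show "out_rate S Q x \<le> rate_bound"
  proof (cases x)
    case (Inl v)
    then have "v \<in> V" using x by (auto simp: states_def)
    then have "out_rate S Q x \<le> (\<Sum>v\<in>V. out_rate S Q (Inl v))"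
      unfolding \<open>x = Inl v\<close>
      by (rule member_le_sum[of v V "\<lambda>v. out_rate S Q (Inl v)"]) (use V_fin out_nonneg in \<open>auto simp: states_def\<close>)
    then show ?thesis using W_part by (simp add: rate_bound_def)
  next
    case (Inr w)
    then show ?thesis
      using x out_rate_W_le[of w] V_part by (auto simp: rate_bound_def states_def)
  qed
qed (use Q_nonneg Q_finite in auto)

lemma cand_abs_summable: "(\<lambda>x. norm (cand N P \<beta> u x)) summable_on S"
proof -
  have "((\<lambda>w. \<Sum>j<N. norm (\<beta> j) * norm (P j w))
      has_sum (\<Sum>j<N. norm (\<beta> j) * (\<Sum>\<^sub>\<infinity>w\<in>Wset c. norm (P j w)))) (Wset c)"
    by (rule has_sum_sum) (use abs_conv in \<open>auto intro!: has_sum_cmult_right has_sum_infsum\<close>)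
  then have "(\<lambda>w. norm (cand N P \<beta> u (Inr w))) summable_on Wset c"
    by (rule summable_on_comparison_test[OF has_sum_imp_summable])
       (auto simp: cand_def norm_mult[symmetric] intro: sum_norm_le)
  moreover have "(\<lambda>x. norm (cand N P \<beta> u x)) summable_on Inl ` V"
    using V_fin by simp
  ultimately show ?thesis
    unfolding states_def
    by (intro summable_on_Un_disjoint) (auto simp: summable_on_reindex inj_on_def o_def)
qed

text \<open>At interior states the balance equation of a combination of the \<open>P\<^sub>j\<close>
  is a combination of inner equations, since no jump from \<open>V\<close> reaches level \<open>K\<close>.\<close>
lemma cand_balanced_interior:
  assumes w: "w \<in> Wset c" "K \<le> int (fst w)"
  shows "balance_defect S Q (cand N P \<beta> u) (Inr w) = 0"
proof -
  have "((\<lambda>w'. P j w' * complex_of_real (Q (Inr w') (Inr w)))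
      has_sum P j w * complex_of_real (out_rate S Q (Inr w))) (Wset c - {w})" if "j < N" for j
  proof (rule inner_eqs_imp_balance_W[OF w _ sol[OF that]])
    show "norm (P j w') \<le> (\<Sum>\<^sub>\<infinity>w\<in>Wset c. norm (P j w))" if "w' \<in> Wset c" for w'
      using finite_sum_le_infsum[of "\<lambda>w. norm (P j w)" "Wset c" "{w'}"] abs_conv[OF \<open>j < N\<close>] that
      by simp
  qed
  then have "((\<lambda>w'. \<Sum>j<N. \<beta> j * (P j w' * complex_of_real (Q (Inr w') (Inr w))))
      has_sum (\<Sum>j<N. \<beta> j * (P j w * complex_of_real (out_rate S Q (Inr w))))) (Wset c - {w})"
    by (intro has_sum_sum has_sum_cmult_right) auto
  then have "((\<lambda>y. cand N P \<beta> u y * complex_of_real (Q y (Inr w)))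
      has_sum cand N P \<beta> u (Inr w) * complex_of_real (out_rate S Q (Inr w))) (Inr ` (Wset c - {w}))"
    by (subst has_sum_reindex) (auto simp: inj_on_def o_def cand_def sum_distrib_right mult.assoc)
  then have "((\<lambda>y. cand N P \<beta> u y * complex_of_real (Q y (Inr w)))
      has_sum cand N P \<beta> u (Inr w) * complex_of_real (out_rate S Q (Inr w))) (S - {Inr w})"
    by (rule has_sum_cong_neutral[THEN iffD1, rotated -1]) (use Q_VW[OF _ w] in \<open>auto simp: Diff_states\<close>)
  then show ?thesis
    by (simp add: balance_defect_eq_0_iff_complex infsumI)
qed

lemma boundary_sys_iff_balanced:
  "boundary_sys V c K Q N P \<beta> u \<longleftrightarrow> balanced S Q (cand N P \<beta> u) \<and> infsum (cand N P \<beta> u) S = 1"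
proof -
  have "balance_defect S Q (cand N P \<beta> u) x = 0"
    if "x \<in> S" "\<not> (case x of Inl _ \<Rightarrow> True | Inr w \<Rightarrow> int (fst w) < K)" for x
    using that cand_balanced_interior by (auto simp: states_def)
  then show ?thesis
    unfolding boundary_sys_def balanced_def balance_defect_eq_0_iff_complex[symmetric] by blast
qed

lemma boundary_sys_iff_eq_equilibrium:
  "boundary_sys V c K Q N P \<beta> u \<longleftrightarrow> (\<forall>x\<in>S. cand N P \<beta> u x = complex_of_real (p x))"
proof
  assume "boundary_sys V c K Q N P \<beta> u"
  then show "\<forall>x\<in>S. cand N P \<beta> u x = complex_of_real (p x)"
    using balanced_eq_multiple[OF irred equil cand_abs_summable] by (simp add: boundary_sys_iff_balanced)
next
  assume eq: "\<forall>x\<in>S. cand N P \<beta> u x = complex_of_real (p x)"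
  have pN: "(\<lambda>x. norm (p x)) summable_on S"
    using equil by (rule equilibrium_abs_summable)
  have "balanced S Q (\<lambda>x. complex_of_real (p x))"
    using balance_defect_bounded_linear[OF bounded_linear_of_real[where 'a=complex] pN] equilibrium_balanced[OF equil]
    by (simp add: balanced_def)
  then have "balanced S Q (cand N P \<beta> u)"
    using balance_defect_cong[of S "cand N P \<beta> u"] eq by (simp add: balanced_def)
  moreover have "infsum (cand N P \<beta> u) S = 1"
  proof -
    have "((\<lambda>x. complex_of_real (p x)) has_sum 1) S"
      using has_sum_of_real[where f=p and S=1 and A=S] equil by (simp add: is_equilibrium_def)
    moreover have "infsum (cand N P \<beta> u) S = infsum (\<lambda>x. complex_of_real (p x)) S"
      using eq by (intro infsum_cong) auto
    ultimately show ?thesis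
      by (simp add: infsumI)
  qed
  ultimately show "boundary_sys V c K Q N P \<beta> u"
    by (simp add: boundary_sys_iff_balanced)
qed

definition boundary :: "('v + wstate) set" where
  "boundary = V <+> {w \<in> Wset c. int (fst w) < K}"

definition unknowns :: "(nat + 'v) set" where
  "unknowns = {..<N} <+> V"

text \<open>The unknowns of the boundary system are the \<open>N\<close> coefficients and the values on \<open>V\<close>,
  collected in one vector indexed by \<open>nat + 'v\<close>.\<close>
abbreviation cand_of :: "(nat + 'v \<Rightarrow> complex) \<Rightarrow> 'v + wstate \<Rightarrow> complex" where
  "cand_of \<gamma> \<equiv> cand N P (\<lambda>j. \<gamma> (Inl j)) (\<lambda>v. \<gamma> (Inr v))"

text \<open>There are as many boundary states as unknowns: \<open>N = 2\<^sup>c K\<close> counts the states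
  of \<open>W\<close> below level \<open>K\<close>.\<close>
lemma card_boundary: "finite boundary" "card boundary = card unknowns"
proof -
  have low: "{w \<in> Wset c. int (fst w) < K} = {..<nat K} \<times> Pow {1..c}"
    using K_pos by (auto simp: Wset_def)
  have "card {w \<in> Wset c. int (fst w) < K} = N"
    unfolding low by (simp add: card_cartesian_product card_Pow)
  moreover have "finite {w \<in> Wset c. int (fst w) < K}"
    unfolding low by simp
  ultimately show "finite boundary" "card boundary = card unknowns"
    unfolding boundary_def unknowns_def using V_fin
    by (simp_all add: card_Plus)
qed

lemma cand_of_lincomb:
  assumes y: "y \<in> S"
  shows "cand_of \<gamma> y = (\<Sum>i\<in>unknowns. \<gamma> i * cand_of (\<lambda>i'. if i' = i then 1 else 0) y)"
proof (cases y)
  case (Inl v)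
  then have "Inr v \<in> unknowns" using y by (auto simp: states_def unknowns_def)
  then show ?thesis
    using V_fin by (simp add: Inl cand_def unknowns_def if_distrib[where f="\<lambda>z. _ * z"] sum.delta'
      cong: if_cong)
next
  case (Inr w)
  have "(\<Sum>i\<in>unknowns. \<gamma> i * cand_of (\<lambda>i'. if i' = i then 1 else 0) (Inr w))
      = (\<Sum>i\<in>unknowns. \<Sum>j<N. if i = Inl j then \<gamma> i * P j w else 0)"
    by (auto simp: cand_def sum_distrib_left intro!: sum.cong)
  also have "\<dots> = (\<Sum>j<N. \<Sum>i\<in>unknowns. if i = Inl j then \<gamma> i * P j w else 0)"
    by (rule sum.swap)
  also have "\<dots> = cand_of \<gamma> (Inr w)"
    using V_fin by (auto simp: cand_def unknowns_def sum.delta intro!: sum.cong)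
  finally show ?thesis by (simp add: Inr)
qed

lemma cand_balanced_off_boundary:
  assumes x: "x \<in> S - boundary"
  shows "balance_defect S Q (cand N P \<beta> u) x = 0"
proof -
  obtain w where w: "x = Inr w" "w \<in> Wset c"
    using x by (auto simp: states_def boundary_def)
  then have "w \<notin> {w \<in> Wset c. int (fst w) < K}"
    using x by (auto simp: boundary_def)
  then show ?thesis
    using w cand_balanced_interior by auto
qed

lemma boundary_defects_sum_0: "(\<Sum>x\<in>boundary. balance_defect S Q (cand N P \<beta> u) x) = 0"
proof -
  have "(balance_defect S Q (cand N P \<beta> u) has_sum 0) S"
    by (rule balance_defect_has_sum_0[OF cand_abs_summable])
  then have "(balance_defect S Q (cand N P \<beta> u) has_sum 0) boundary"
    by (rule has_sum_cong_neutral[THEN iffD1, rotated -1])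
       (use cand_balanced_off_boundary in \<open>auto simp: boundary_def states_def\<close>)
  then show ?thesis
    using card_boundary(1) by (simp add: has_sum_finite_iff)
qed

lemma cand_of_eq_0_imp_eq_0:
  assumes zero: "\<forall>x\<in>S. cand_of \<gamma> x = 0"
  shows "\<forall>i\<in>unknowns. \<gamma> i = 0"
proof -
  have "\<forall>j<N. \<gamma> (Inl j) = 0"
  proof (rule lin_indep, rule ballI)
    fix w assume "w \<in> Wset c"
    then show "(\<Sum>j<N. \<gamma> (Inl j) * P j w) = 0"
      using zero[rule_format, of "Inr w"] by (simp add: cand_def states_def)
  qed
  moreover have "\<gamma> (Inr v) = 0" if "v \<in> V" for v
    using zero[rule_format, of "Inl v"] that by (simp add: cand_def states_def)
  ultimately show ?thesis
    by (auto simp: unknowns_def)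
qed

text \<open>The boundary equations are linear in the unknowns and, by conservation, sum to
  zero; hence the square system is singular and has a nontrivial solution.\<close>
lemma exists_nonzero_balanced_cand:
  "\<exists>\<gamma>. balanced S Q (cand_of \<gamma>) \<and> (\<exists>x\<in>S. cand_of \<gamma> x \<noteq> 0)"
proof -
  define e where "e i = cand_of (\<lambda>i'. if i' = i then 1 else 0)" for i
  define m where "m x i = balance_defect S Q (e i) x" for x i
  have "finite unknowns" "unknowns \<noteq> {}"
    using V_fin K_pos by (auto simp: unknowns_def lessThan_empty_iff)
  then obtain \<gamma> where \<gamma>: "\<exists>i\<in>unknowns. \<gamma> i \<noteq> 0"
    "\<forall>x\<in>boundary. (\<Sum>i\<in>unknowns. m x i * \<gamma> i) = 0"
    using zero_column_sums_imp_kernel[of unknowns boundary m] card_boundary(2) boundary_defects_sum_0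
    by (auto simp: m_def e_def)
  have "balance_defect S Q (cand_of \<gamma>) x = 0" if x: "x \<in> S" for x
  proof -
    have "balance_defect S Q (cand_of \<gamma>) x = balance_defect S Q (\<lambda>y. \<Sum>i\<in>unknowns. \<gamma> i * e i y) x"
      using x by (intro balance_defect_cong) (simp_all add: cand_of_lincomb e_def)
    also have "\<dots> = (\<Sum>i\<in>unknowns. \<gamma> i * m x i)"
      unfolding m_def e_def by (rule balance_defect_lincomb[OF \<open>finite unknowns\<close> cand_abs_summable x])
    also have "\<dots> = (\<Sum>i\<in>unknowns. m x i * \<gamma> i)"
      by (simp add: mult.commute)
    finally show ?thesis
      using \<gamma>(2) cand_balanced_off_boundary x by (cases "x \<in> boundary") auto
  qed
  moreover have "\<exists>x\<in>S. cand_of \<gamma> x \<noteq> 0"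
    using cand_of_eq_0_imp_eq_0 \<gamma>(1) by blast
  ultimately show ?thesis
    by (auto simp: balanced_def)
qed

lemma exists_cand_eq_equilibrium:
  "\<exists>\<alpha>. \<forall>x\<in>S. cand N P \<alpha> (\<lambda>v. complex_of_real (p (Inl v))) x = complex_of_real (p x)"
proof -
  obtain \<gamma> x1 where bal: "balanced S Q (cand_of \<gamma>)" and x1: "x1 \<in> S" "cand_of \<gamma> x1 \<noteq> 0"
    using exists_nonzero_balanced_cand by blast
  define t where "t = infsum (cand_of \<gamma>) S"
  have mult: "cand_of \<gamma> x = t * complex_of_real (p x)" if "x \<in> S" for x
    using balanced_eq_multiple[OF irred equil cand_abs_summable bal] that by (simp add: t_def)
  then have "t \<noteq> 0" using x1 by force
  have "cand N P (\<lambda>j. \<gamma> (Inl j) / t) (\<lambda>v. complex_of_real (p (Inl v))) x = complex_of_real (p x)"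
    if x: "x \<in> S" for x
  proof (cases x)
    case (Inr w)
    then have "cand N P (\<lambda>j. \<gamma> (Inl j) / t) (\<lambda>v. complex_of_real (p (Inl v))) x = cand_of \<gamma> x / t"
      by (simp add: cand_def sum_divide_distrib)
    then show ?thesis
      using mult[OF x] \<open>t \<noteq> 0\<close> by simp
  qed (simp add: cand_def)
  then show ?thesis by blast
qed

lemma coefficients_unique:
  assumes "\<forall>w\<in>Wset c. (\<Sum>j<N. \<beta> j * P j w) = (\<Sum>j<N. \<alpha> j * P j w)"
  shows "\<forall>j<N. \<beta> j = \<alpha> j"
  using lin_indep[of "\<lambda>j. \<beta> j - \<alpha> j"] assms
  by (simp add: left_diff_distrib sum_subtractf)

lemma equilibrium_decomposition:
  "\<exists>\<alpha>. (\<forall>w\<in>Wset c. complex_of_real (p (Inr w)) = (\<Sum>j<N. \<alpha> j * P j w))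
     \<and> boundary_sys V c K Q N P \<alpha> (\<lambda>v. complex_of_real (p (Inl v)))
     \<and> (\<forall>\<beta> u. boundary_sys V c K Q N P \<beta> u \<longrightarrow> (\<forall>j<N. \<beta> j = \<alpha> j))"
proof -
  obtain \<alpha> where \<alpha>: "\<forall>x\<in>S. cand N P \<alpha> (\<lambda>v. complex_of_real (p (Inl v))) x = complex_of_real (p x)"
    using exists_cand_eq_equilibrium by blast
  have W: "complex_of_real (p (Inr w)) = (\<Sum>j<N. \<alpha> j * P j w)" if "w \<in> Wset c" for w
    using \<alpha> that by (force simp: states_def cand_def)
  have "\<forall>j<N. \<beta> j = \<alpha> j" if sys: "boundary_sys V c K Q N P \<beta> u" for \<beta> u
  proof (rule coefficients_unique, rule ballI)
    fix w assume w: "w \<in> Wset c"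
    then have "cand N P \<beta> u (Inr w) = complex_of_real (p (Inr w))"
      using sys by (simp add: boundary_sys_iff_eq_equilibrium states_def)
    with W[OF w] show "(\<Sum>j<N. \<beta> j * P j w) = (\<Sum>j<N. \<alpha> j * P j w)"
      by (simp add: cand_def)
  qed
  moreover have "boundary_sys V c K Q N P \<alpha> (\<lambda>v. complex_of_real (p (Inl v)))"
    using \<alpha> by (simp add: boundary_sys_iff_eq_equilibrium)
  ultimately show ?thesis
    using W by blast
qed

end

theorem lemma2:
  fixes V :: "'v set" and c :: nat and K :: int
    and a b cc d :: "int \<Rightarrow> nat \<Rightarrow> real"
    and Q :: "'v + wstate \<Rightarrow> 'v + wstate \<Rightarrow> real"
    and p :: "'v + wstate \<Rightarrow> real"
    and P :: "nat \<Rightarrow> wstate \<Rightarrow> complex"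
  assumes V_fin: "finite V" and c_pos: "c \<ge> 1" and K_pos: "K \<ge> 1"
    and rates_nonneg: "\<And>k i. i \<in> {1..c} \<Longrightarrow> k \<le> K \<Longrightarrow>
           a k i \<ge> 0 \<and> b k i \<ge> 0 \<and> cc k i \<ge> 0 \<and> d k i \<ge> 0"
    and rates_finite: "\<And>i. i \<in> {1..c} \<Longrightarrow>
           (\<lambda>k. a k i) summable_on {..K} \<and> (\<lambda>k. b k i) summable_on {..K} \<and>
           (\<lambda>k. cc k i) summable_on {..K} \<and> (\<lambda>k. d k i) summable_on {..K}"
    and Q_nonneg: "\<And>x y. x \<in> states V c \<Longrightarrow> y \<in> states V c \<Longrightarrow> x \<noteq> y \<Longrightarrow> Q x y \<ge> 0"
    and Q_WW: "\<And>w w'. w \<in> Wset c \<Longrightarrow> w' \<in> Wset c \<Longrightarrow> w \<noteq> w' \<Longrightarrow>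
           Q (Inr w) (Inr w') = wrate c K a b cc d w w'"
    and Q_WV: "\<And>w. w \<in> Wset c \<Longrightarrow>
           (\<Sum>v\<in>V. Q (Inr w) (Inl v)) = to_V_rate c a b cc d w"
    and Q_VW: "\<And>v w. v \<in> V \<Longrightarrow> w \<in> Wset c \<Longrightarrow> int (fst w) \<ge> K \<Longrightarrow> Q (Inl v) (Inr w) = 0"
    and Q_finite: "\<And>x. x \<in> states V c \<Longrightarrow> (Q x) summable_on (states V c - {x})"
    and irred: "irreducible_chain (states V c) Q"
    and equil: "is_equilibrium (states V c) Q p"
    and sol: "\<And>j. j < 2 ^ c * nat K \<Longrightarrow> inner_eqs c K a b cc d (P j)"
    and abs_conv: "\<And>j. j < 2 ^ c * nat K \<Longrightarrow> (\<lambda>w. norm (P j w)) summable_on Wset c"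
    and lin_indep: "\<And>\<gamma>. (\<forall>w\<in>Wset c. (\<Sum>j<2 ^ c * nat K. \<gamma> j * P j w) = 0) \<Longrightarrow>
           \<forall>j<2 ^ c * nat K. \<gamma> j = 0"
  shows "\<exists>\<alpha>. (\<forall>w\<in>Wset c. complex_of_real (p (Inr w)) = (\<Sum>j<2 ^ c * nat K. \<alpha> j * P j w))
            \<and> boundary_sys V c K Q (2 ^ c * nat K) P \<alpha> (\<lambda>v. complex_of_real (p (Inl v)))
            \<and> (\<forall>\<beta> u. boundary_sys V c K Q (2 ^ c * nat K) P \<beta> u \<longrightarrow>
                   (\<forall>j<2 ^ c * nat K. \<beta> j = \<alpha> j))"
proof -
  interpret boundary_problem c K a b cc d V Q p P
    by unfold_locales (fact assms)+
  show ?thesis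
    by (rule equilibrium_decomposition)
qed

end
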